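(* Let $D$ be an infinite alphabet. A language $L$ of finite words over $D$ is recognised by some (original) two-way $k$-register automaton for some $k$ if and only if it is recognised by some modified two-way $k'$-register automaton for some $k'$. That is, the original and the modified models of two-way register automata over an infinite alphabet have the same recognising power.
   Context: An (original) non-deterministic two-way $k$-register automaton over an infinite alphabet $D$ is a tuple $(Q,q_0,F,\tau_0,P)$ where $Q$ is a finite set of states, $q_0\in Q$ is the initial state, $F\subseteq Q$ is the set of final states, $\tau_0:\{1,\dots,k\}\to D\cup\{\triangleright,\triangleleft\}$ is the initial register assignment, and $P$ is a finite set of transitions of the forms: (1) $(i,q)\to(q',d)$: if the current state is $q$ and the observed symbol equals the value in register $i$, enter state $q'$ and move in direction $d$; (2) $q\to(q',i,d)$: if the current state is $q$ and the observed symbol is different from all values held in the registers, enter state $q'$, copy the current symbol into register $i$, and move in direction $d$. Here $i\in\{1,\dots,k\}$, $q,q'\in Q$, $d\in\{\mathrm{stay},\mathrm{left},\mathrm{right}\}$. The input word is written on a read-only tape delimited by $\triangleright$ and $\triangleleft$; the automaton starts in $q_0$ at the first letter, applies non-deterministically any applicable transitions, and accepts if it can ever reach a state in $F$; the recognised language is the set of accepted words. A modified two-way $k$-register automaton additionally allows transitions of the forms: (3) $(i,q)\to(q',j,d)$: if the current state is $q$ and the observed symbol equals the value in register $i$, enter $q'$, copy the current symbol into register $j$ and move in direction $d$; (4) $q\to(q',d)$: if the current state is $q$ and the observed symbol is different from all register values, enter $q'$ and move in direction $d$ (without storing). In particular, in the modified model the same value may be held in several registers. *)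

theory Defs
  imports Main
begin

datatype 'd sym = LEnd | REnd | Let 'd

datatype dir = Stay | MLeft | MRight

text \<open>EqT i q q' d        : (i,q) -> (q',d)          form (1)
  NewT q q' i d       : q -> (q',i,d)            form (2)
  EqStoreT i q q' j d : (i,q) -> (q',j,d)        form (3)
  NewSkipT q q' d     : q -> (q',d)              form (4)\<close>
datatype trans =
    EqT nat nat nat dir
  | NewT nat nat nat dir
  | EqStoreT nat nat nat nat dir
  | NewSkipT nat nat dir

record 'd reg_aut =
  states :: "nat set"
  init   :: nat
  final  :: "nat set"
  tau0   :: "nat \<Rightarrow> 'd sym"
  trans  :: "trans set"

fun trans_ok :: "nat \<Rightarrow> nat set \<Rightarrow> trans \<Rightarrow> bool" where
  "trans_ok k Q (EqT i q q' d) \<longleftrightarrow> i \<in> {1..k} \<and> q \<in> Q \<and> q' \<in> Q"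
| "trans_ok k Q (NewT q q' i d) \<longleftrightarrow> i \<in> {1..k} \<and> q \<in> Q \<and> q' \<in> Q"
| "trans_ok k Q (EqStoreT i q q' j d) \<longleftrightarrow> i \<in> {1..k} \<and> j \<in> {1..k} \<and> q \<in> Q \<and> q' \<in> Q"
| "trans_ok k Q (NewSkipT q q' d) \<longleftrightarrow> q \<in> Q \<and> q' \<in> Q"

fun is_original_trans :: "trans \<Rightarrow> bool" where
  "is_original_trans (EqT _ _ _ _) = True"
| "is_original_trans (NewT _ _ _ _) = True"
| "is_original_trans _ = False"

definition modified_ra :: "nat \<Rightarrow> 'd reg_aut \<Rightarrow> bool" where
  "modified_ra k A \<longleftrightarrow> finite (states A) \<and> init A \<in> states A \<and> final A \<subseteq> states A
     \<and> finite (trans A) \<and> (\<forall>t \<in> trans A. trans_ok k (states A) t)"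

definition original_ra :: "nat \<Rightarrow> 'd reg_aut \<Rightarrow> bool" where
  "original_ra k A \<longleftrightarrow> modified_ra k A \<and> (\<forall>t \<in> trans A. is_original_trans t)"

text \<open>Tape contents of word w: position 0 is the left marker, positions 1..n the letters,
  position n+1 the right marker.\<close>
definition tape :: "'d list \<Rightarrow> int \<Rightarrow> 'd sym" where
  "tape w p = (if p \<le> 0 then LEnd else if p \<ge> int (length w) + 1 then REnd
               else Let (w ! nat (p - 1)))"

fun move :: "dir \<Rightarrow> int \<Rightarrow> int" where
  "move Stay p = p"
| "move MLeft p = p - 1"
| "move MRight p = p + 1"

type_synonym 'd config = "nat \<times> int \<times> (nat \<Rightarrow> 'd sym)"

fun step_by :: "nat \<Rightarrow> 'd list \<Rightarrow> trans \<Rightarrow> 'd config \<Rightarrow> 'd config \<Rightarrow> bool" where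
  "step_by k w (EqT i q1 q2 d) (q, p, r) (q', p', r') \<longleftrightarrow>
     q = q1 \<and> r i = tape w p \<and> q' = q2 \<and> r' = r \<and> p' = move d p"
| "step_by k w (NewT q1 q2 j d) (q, p, r) (q', p', r') \<longleftrightarrow>
     q = q1 \<and> (\<forall>i\<in>{1..k}. r i \<noteq> tape w p) \<and> q' = q2 \<and> r' = r(j := tape w p) \<and> p' = move d p"
| "step_by k w (EqStoreT i q1 q2 j d) (q, p, r) (q', p', r') \<longleftrightarrow>
     q = q1 \<and> r i = tape w p \<and> q' = q2 \<and> r' = r(j := tape w p) \<and> p' = move d p"
| "step_by k w (NewSkipT q1 q2 d) (q, p, r) (q', p', r') \<longleftrightarrow>
     q = q1 \<and> (\<forall>i\<in>{1..k}. r i \<noteq> tape w p) \<and> q' = q2 \<and> r' = r \<and> p' = move d p"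

definition step :: "nat \<Rightarrow> 'd reg_aut \<Rightarrow> 'd list \<Rightarrow> 'd config \<Rightarrow> 'd config \<Rightarrow> bool" where
  "step k A w c c' \<longleftrightarrow> (\<exists>t \<in> trans A. step_by k w t c c')
      \<and> 0 \<le> fst (snd c') \<and> fst (snd c') \<le> int (length w) + 1"

definition accepts :: "nat \<Rightarrow> 'd reg_aut \<Rightarrow> 'd list \<Rightarrow> bool" where
  "accepts k A w \<longleftrightarrow> (\<exists>q p r. (step k A w)\<^sup>*\<^sup>* (init A, 1, tau0 A) (q, p, r) \<and> q \<in> final A)"

definition lang :: "nat \<Rightarrow> 'd reg_aut \<Rightarrow> 'd list set" where
  "lang k A = {w. accepts k A w}"

end

theory Submission
  imports Defs "HOL-Library.Countable"
begin

text \<open>A modified automaton with k registers is simulated by an original one with k + 1 registers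
  whose contents are kept pairwise distinct. The control state of the simulator records, besides
  the simulated state, a pointer map telling for each simulated register which physical register
  holds its value; copying a register only redirects a pointer. At most k of the k + 1 physical
  registers are pointed to, so there is always a free one. A symbol is new for the simulated
  automaton iff it is not held by a pointed-to register, i.e. iff it is either held by a free
  register or new for the simulator: in the first case the simulator tests equality with that
  free register, in the second it stores the symbol there. Since the alphabet is infinite, the
  k + 1 physical registers can initially be filled with distinct symbols.\<close>

lemma rtranclp_simulation:
  assumes sim: "\<And>a b a'. S a b \<Longrightarrow> R a a' \<Longrightarrow> \<exists>b'. S a' b' \<and> R' b b'"
    and "R\<^sup>*\<^sup>* a a'" and "S a b"
  shows "\<exists>b'. S a' b' \<and> R'\<^sup>*\<^sup>* b b'"
  using assms(2,3)
proof (induction rule: rtranclp_induct)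
  case (step y z)
  then obtain b' where "S y b'" "R'\<^sup>*\<^sup>* b b'" by blast
  moreover obtain b'' where "S z b''" "R' b' b''" using sim[OF \<open>S y b'\<close> step.hyps(2)] by blast
  ultimately show ?case by (blast intro: rtranclp.rtrancl_into_rtrancl)
qed blast

subsection \<open>Pointer maps\<close>

definition pointer_maps :: "nat \<Rightarrow> nat list set" where
  "pointer_maps k = {xs. length xs = k \<and> set xs \<subseteq> {1..Suc k}}"

definition free_slots :: "nat \<Rightarrow> nat list \<Rightarrow> nat set" where
  "free_slots k xs = {1..Suc k} - set xs"

lemma finite_pointer_maps: "finite (pointer_maps k)"
  using finite_lists_length_eq[of "{1..Suc k}" k] by (simp add: pointer_maps_def conj_commute)

lemma pointer_maps_update:
  "xs \<in> pointer_maps k \<Longrightarrow> v \<in> {1..Suc k} \<Longrightarrow> xs[j := v] \<in> pointer_maps k"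
  unfolding pointer_maps_def using set_update_subset_insert[of xs j v] by auto

lemma pointer_maps_nth:
  assumes "xs \<in> pointer_maps k" and "i \<in> {1..k}"
  shows "xs ! (i - 1) \<in> {1..Suc k}"
proof -
  have "xs ! (i - 1) \<in> set xs" using assms by (auto simp: pointer_maps_def intro!: nth_mem)
  with assms(1) show ?thesis by (auto simp: pointer_maps_def)
qed

lemma free_slots_nonempty: "xs \<in> pointer_maps k \<Longrightarrow> free_slots k xs \<noteq> {}"
  using card_mono[OF finite_set, of "{1..Suc k}" xs] card_length[of xs]
  by (force simp: free_slots_def pointer_maps_def)

text \<open>Simulated register i is held in physical register xs ! (i - 1): registers are numbered
  from 1, list positions from 0.\<close>

definition represents :: "nat \<Rightarrow> nat list \<Rightarrow> (nat \<Rightarrow> 'd sym) \<Rightarrow> (nat \<Rightarrow> 'd sym) \<Rightarrow> bool" where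
  "represents k xs r rB \<longleftrightarrow>
     xs \<in> pointer_maps k \<and> inj_on rB {1..Suc k} \<and> (\<forall>i\<in>{1..k}. r i = rB (xs ! (i - 1)))"

lemma represents_image:
  assumes "represents k xs r rB"
  shows "r ` {1..k} = rB ` set xs"
proof -
  have len: "length xs = k" and r: "\<forall>i\<in>{1..k}. r i = rB (xs ! (i - 1))"
    using assms by (auto simp: represents_def pointer_maps_def)
  have slots: "{1..k} = Suc ` {0..<k}" by (simp add: atLeastLessThanSuc_atLeastAtMost)
  have "r ` {1..k} = (\<lambda>i. rB (xs ! (i - 1))) ` Suc ` {0..<k}"
    using r unfolding slots by (intro image_cong) simp_all
  also have "\<dots> = rB ` (!) xs ` {0..<k}"
    unfolding image_image by simp
  also have "\<dots> = rB ` set xs" using nth_image[of k xs] len by simp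
  finally show ?thesis .
qed

lemma represents_redirect:
  assumes "represents k xs r rB" and "i \<in> {1..k}" and "f \<in> {1..Suc k}"
  shows "represents k (xs[i - 1 := f]) (r(i := rB f)) rB"
  using assms pointer_maps_update
  by (auto simp: represents_def pointer_maps_def nth_list_update)

lemma notin_image_subset_iff:
  assumes "inj_on g S" and "P \<subseteq> S" and "S - P \<noteq> {}"
  shows "a \<notin> g ` P \<longleftrightarrow> (\<exists>f\<in>S - P. g f = a \<or> a \<notin> g ` S)"
proof
  assume a: "a \<notin> g ` P"
  show "\<exists>f\<in>S - P. g f = a \<or> a \<notin> g ` S"
  proof (cases "a \<in> g ` S")
    case True
    with a show ?thesis by blast
  qed (use assms(3) in blast)
next
  assume "\<exists>f\<in>S - P. g f = a \<or> a \<notin> g ` S"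
  then obtain f where f: "f \<in> S" "f \<notin> P" "g f = a \<or> a \<notin> g ` S" by blast
  show "a \<notin> g ` P"
  proof
    assume "a \<in> g ` P"
    then obtain h where h: "h \<in> P" "g h = a" by blast
    with assms(2) have "h \<in> S" "a \<in> g ` S" by auto
    with f h inj_onD[OF assms(1), of f h] show False by auto
  qed
qed

lemma represents_fresh_iff:
  assumes "represents k xs r rB"
  shows "a \<notin> r ` {1..k} \<longleftrightarrow> (\<exists>f\<in>free_slots k xs. rB f = a \<or> a \<notin> rB ` {1..Suc k})"
proof -
  have xs: "xs \<in> pointer_maps k" and "inj_on rB {1..Suc k}"
    using assms by (auto simp: represents_def)
  moreover have "free_slots k xs \<noteq> {}" using xs by (rule free_slots_nonempty)
  ultimately show ?thesis
    using notin_image_subset_iff[of rB "{1..Suc k}" "set xs" a] represents_image[OF assms]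
    by (simp add: pointer_maps_def free_slots_def)
qed

lemma represents_fresh_store:
  assumes "represents k xs r rB" and "f \<in> free_slots k xs" and "rB f = a \<or> a \<notin> rB ` {1..Suc k}"
  shows "represents k xs r (rB(f := a))"
proof -
  have "inj_on rB {1..Suc k}" using assms(1) by (simp add: represents_def)
  with assms(3) have "inj_on (rB(f := a)) {1..Suc k}"
    by (metis fun_upd_idem inj_on_fun_updI)
  moreover have "xs ! (i - 1) \<noteq> f" if "i \<in> {1..k}" for i
    using assms(1,2) that by (auto simp: represents_def pointer_maps_def free_slots_def)
  ultimately show ?thesis using assms(1) by (simp add: represents_def)
qed

subsection \<open>The simulating automaton\<close>

definition encode_state :: "nat \<Rightarrow> nat list \<Rightarrow> nat" where
  "encode_state q xs = to_nat (q, xs)"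

lemma encode_state_eq_iff [simp]:
  "encode_state q xs = encode_state q' xs' \<longleftrightarrow> q = q' \<and> xs = xs'"
  by (simp add: encode_state_def)

lemma encode_state_in_image_iff [simp]:
  "encode_state q xs \<in> case_prod encode_state ` (Q \<times> P) \<longleftrightarrow> q \<in> Q \<and> xs \<in> P"
proof -
  have "inj (case_prod encode_state)" by (auto simp: inj_def)
  from inj_image_mem_iff[OF this, of "(q, xs)"] show ?thesis by simp
qed

definition fresh_read_trans :: "nat \<Rightarrow> nat \<Rightarrow> nat \<Rightarrow> dir \<Rightarrow> trans set" where
  "fresh_read_trans q q' f d = {NewT q q' f d, EqT f q q' d}"

fun sim_trans :: "nat \<Rightarrow> nat list \<Rightarrow> trans \<Rightarrow> trans set" where
  "sim_trans k xs (EqT i q q' d) = {EqT (xs ! (i - 1)) (encode_state q xs) (encode_state q' xs) d}"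
| "sim_trans k xs (EqStoreT i q q' j d) =
     {EqT (xs ! (i - 1)) (encode_state q xs) (encode_state q' (xs[j - 1 := xs ! (i - 1)])) d}"
| "sim_trans k xs (NewT q q' i d) =
     (\<Union>f\<in>free_slots k xs. fresh_read_trans (encode_state q xs) (encode_state q' (xs[i - 1 := f])) f d)"
| "sim_trans k xs (NewSkipT q q' d) =
     (\<Union>f\<in>free_slots k xs. fresh_read_trans (encode_state q xs) (encode_state q' xs) f d)"

definition pointer_automaton ::
    "nat \<Rightarrow> 'd reg_aut \<Rightarrow> (nat \<Rightarrow> 'd sym) \<Rightarrow> nat list \<Rightarrow> 'd reg_aut" where
  "pointer_automaton k A rB0 xs0 =
     \<lparr>states = case_prod encode_state ` (states A \<times> pointer_maps k),
      init = encode_state (init A) xs0,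
      final = case_prod encode_state ` (final A \<times> pointer_maps k),
      tau0 = rB0,
      trans = (\<Union>t\<in>trans A. \<Union>xs\<in>pointer_maps k. sim_trans k xs t)\<rparr>"

lemma sim_trans_original:
  assumes "trans_ok k Q t" and "xs \<in> pointer_maps k" and "tB \<in> sim_trans k xs t"
  shows "is_original_trans tB \<and> trans_ok (Suc k) (case_prod encode_state ` (Q \<times> pointer_maps k)) tB"
  using assms pointer_maps_nth[OF assms(2)] pointer_maps_update[OF assms(2)]
  by (cases t) (auto simp: fresh_read_trans_def free_slots_def)

lemma original_ra_pointer_automaton:
  assumes "modified_ra k A" and "xs0 \<in> pointer_maps k"
  shows "original_ra (Suc k) (pointer_automaton k A rB0 xs0)"
proof -
  have "finite (sim_trans k xs t)" for xs t
    by (cases t) (auto simp: fresh_read_trans_def free_slots_def)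
  then show ?thesis
    using assms sim_trans_original finite_pointer_maps
    unfolding original_ra_def modified_ra_def pointer_automaton_def
    by (auto 4 3)
qed

subsection \<open>Step simulation\<close>

lemma step_by_fresh_read_iff:
  "(\<exists>tB\<in>fresh_read_trans qB qB' f d. step_by (Suc k) w tB (q0, p, rB) (q1, p', rB')) \<longleftrightarrow>
     q0 = qB \<and> q1 = qB' \<and> p' = move d p \<and> rB' = rB(f := tape w p) \<and>
     (rB f = tape w p \<or> tape w p \<notin> rB ` {1..Suc k})"
  by (auto simp: fresh_read_trans_def image_iff)

lemma sim_trans_forward:
  assumes R: "represents k xs r rB" and ok: "trans_ok k Q t"
    and st: "step_by k w t (q, p, r) (q', p', r')"
  shows "\<exists>tB\<in>sim_trans k xs t. \<exists>xs' rB'. represents k xs' r' rB' \<and>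
           step_by (Suc k) w tB (encode_state q xs, p, rB) (encode_state q' xs', p', rB')"
proof (cases t)
  case (EqT i q1 q2 d)
  then show ?thesis using R ok st by (auto simp: represents_def)
next
  case (EqStoreT i q1 q2 j d)
  with ok have i: "i \<in> {1..k}" and j: "j \<in> {1..k}" by auto
  have "xs ! (i - 1) \<in> {1..Suc k}" using R pointer_maps_nth[OF _ i] by (simp add: represents_def)
  then have "represents k (xs[j - 1 := xs ! (i - 1)]) (r(j := rB (xs ! (i - 1)))) rB"
    using represents_redirect[OF R j] by blast
  then show ?thesis using EqStoreT R st i by (auto simp: represents_def)
next
  case (NewT q1 q2 i d)
  with st have eqs: "q1 = q" "q2 = q'" "p' = move d p" "r' = r(i := tape w p)"
    and "tape w p \<notin> r ` {1..k}" by auto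
  then obtain f where f: "f \<in> free_slots k xs" "rB f = tape w p \<or> tape w p \<notin> rB ` {1..Suc k}"
    using represents_fresh_iff[OF R] by blast
  let ?rB = "rB(f := tape w p)" and ?xs = "xs[i - 1 := f]"
  have "represents k xs r ?rB" using represents_fresh_store[OF R f] .
  then have "represents k ?xs r' ?rB"
    using represents_redirect[of k xs r ?rB i f] NewT ok eqs f(1) by (auto simp: free_slots_def)
  moreover have "\<exists>tB\<in>fresh_read_trans (encode_state q xs) (encode_state q' ?xs) f d.
      step_by (Suc k) w tB (encode_state q xs, p, rB) (encode_state q' ?xs, p', ?rB)"
    unfolding step_by_fresh_read_iff using eqs f(2) by simp
  ultimately show ?thesis using NewT eqs f(1) by auto
next
  case (NewSkipT q1 q2 d)
  with st have eqs: "q1 = q" "q2 = q'" "p' = move d p" "r' = r"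
    and "tape w p \<notin> r ` {1..k}" by auto
  then obtain f where f: "f \<in> free_slots k xs" "rB f = tape w p \<or> tape w p \<notin> rB ` {1..Suc k}"
    using represents_fresh_iff[OF R] by blast
  let ?rB = "rB(f := tape w p)"
  have "represents k xs r' ?rB" using represents_fresh_store[OF R f] eqs by simp
  moreover have "\<exists>tB\<in>fresh_read_trans (encode_state q xs) (encode_state q' xs) f d.
      step_by (Suc k) w tB (encode_state q xs, p, rB) (encode_state q' xs, p', ?rB)"
    unfolding step_by_fresh_read_iff using eqs f(2) by simp
  ultimately show ?thesis using NewSkipT eqs f(1) by auto
qed

lemma sim_trans_source:
  assumes "tB \<in> sim_trans k ys t" and "step_by (Suc k) w tB (encode_state q xs, p, rB) c'"
  shows "ys = xs"
  using assms by (cases t; cases c') (auto simp: fresh_read_trans_def)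

lemma sim_trans_backward:
  assumes R: "represents k xs r rB" and ok: "trans_ok k Q t" and tB: "tB \<in> sim_trans k xs t"
    and st: "step_by (Suc k) w tB (encode_state q xs, p, rB) (qB', p', rB')"
  shows "\<exists>q' xs' r'. qB' = encode_state q' xs' \<and> represents k xs' r' rB' \<and>
           step_by k w t (q, p, r) (q', p', r')"
proof (cases t)
  case (EqT i q1 q2 d)
  then show ?thesis using R ok tB st by (auto simp: represents_def)
next
  case (EqStoreT i q1 q2 j d)
  with ok have i: "i \<in> {1..k}" and j: "j \<in> {1..k}" by auto
  have "xs ! (i - 1) \<in> {1..Suc k}" using R pointer_maps_nth[OF _ i] by (simp add: represents_def)
  then have "represents k (xs[j - 1 := xs ! (i - 1)]) (r(j := rB (xs ! (i - 1)))) rB"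
    using represents_redirect[OF R j] by blast
  then show ?thesis using EqStoreT R tB st i by (auto simp: represents_def)
next
  case (NewT q1 q2 i d)
  with tB obtain f where f: "f \<in> free_slots k xs"
    and "tB \<in> fresh_read_trans (encode_state q1 xs) (encode_state q2 (xs[i - 1 := f])) f d" by auto
  with st have "encode_state q xs = encode_state q1 xs \<and> qB' = encode_state q2 (xs[i - 1 := f]) \<and>
      p' = move d p \<and> rB' = rB(f := tape w p) \<and> (rB f = tape w p \<or> tape w p \<notin> rB ` {1..Suc k})"
    by (subst step_by_fresh_read_iff[symmetric]) blast
  then have eqs: "q = q1" "qB' = encode_state q2 (xs[i - 1 := f])" "p' = move d p"
    "rB' = rB(f := tape w p)" and new: "rB f = tape w p \<or> tape w p \<notin> rB ` {1..Suc k}"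
    by auto
  have "represents k xs r rB'" using represents_fresh_store[OF R _ new] f eqs by simp
  then have "represents k (xs[i - 1 := f]) (r(i := tape w p)) rB'"
    using represents_redirect[of k xs r rB' i f] NewT ok f eqs by (auto simp: free_slots_def)
  moreover have "tape w p \<notin> r ` {1..k}" using represents_fresh_iff[OF R] f new eqs by blast
  then have "step_by k w t (q, p, r) (q2, p', r(i := tape w p))" using NewT eqs by (auto simp: image_iff)
  ultimately show ?thesis using eqs(2) by blast
next
  case (NewSkipT q1 q2 d)
  with tB obtain f where f: "f \<in> free_slots k xs"
    and "tB \<in> fresh_read_trans (encode_state q1 xs) (encode_state q2 xs) f d" by auto
  with st have "encode_state q xs = encode_state q1 xs \<and> qB' = encode_state q2 xs \<and>
      p' = move d p \<and> rB' = rB(f := tape w p) \<and> (rB f = tape w p \<or> tape w p \<notin> rB ` {1..Suc k})"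
    by (subst step_by_fresh_read_iff[symmetric]) blast
  then have eqs: "q = q1" "qB' = encode_state q2 xs" "p' = move d p"
    "rB' = rB(f := tape w p)" and new: "rB f = tape w p \<or> tape w p \<notin> rB ` {1..Suc k}"
    by auto
  have "represents k xs r rB'" using represents_fresh_store[OF R _ new] f eqs by simp
  moreover have "tape w p \<notin> r ` {1..k}" using represents_fresh_iff[OF R] f new eqs by blast
  then have "step_by k w t (q, p, r) (q2, p', r)" using NewSkipT eqs by (auto simp: image_iff)
  ultimately show ?thesis using eqs(2) by blast
qed

fun sim_config :: "nat \<Rightarrow> 'd config \<Rightarrow> 'd config \<Rightarrow> bool" where
  "sim_config k (q, p, r) (qB, pB, rB) \<longleftrightarrow>
     pB = p \<and> (\<exists>xs. qB = encode_state q xs \<and> represents k xs r rB)"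

lemma step_pointer_automaton_forward:
  assumes A: "modified_ra k A" and S: "sim_config k c cB" and st: "step k A w c c'"
  shows "\<exists>cB'. sim_config k c' cB' \<and> step (Suc k) (pointer_automaton k A rB0 xs0) w cB cB'"
proof -
  obtain q p r q' p' r' where c: "c = (q, p, r)" "c' = (q', p', r')" by (cases c, cases c')
  obtain xs rB where cB: "cB = (encode_state q xs, p, rB)" and R: "represents k xs r rB"
    using S c by (cases cB) auto
  obtain t where t: "t \<in> trans A" and sb: "step_by k w t (q, p, r) (q', p', r')"
    and pos: "0 \<le> p'" "p' \<le> int (length w) + 1"
    using st c by (auto simp: step_def)
  have "trans_ok k (states A) t" using A t by (auto simp: modified_ra_def)
  from sim_trans_forward[OF R this sb] obtain tB xs' rB' where tB: "tB \<in> sim_trans k xs t"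
    and R': "represents k xs' r' rB'"
    and sb': "step_by (Suc k) w tB (encode_state q xs, p, rB) (encode_state q' xs', p', rB')"
    by blast
  have "xs \<in> pointer_maps k" using R by (simp add: represents_def)
  then have "tB \<in> trans (pointer_automaton k A rB0 xs0)"
    using t tB unfolding pointer_automaton_def by auto
  then have "step (Suc k) (pointer_automaton k A rB0 xs0) w cB (encode_state q' xs', p', rB')"
    using sb' pos cB unfolding step_def by auto
  then show ?thesis using R' c by auto
qed

lemma step_pointer_automaton_backward:
  assumes A: "modified_ra k A" and S: "sim_config k c cB"
    and st: "step (Suc k) (pointer_automaton k A rB0 xs0) w cB cB'"
  shows "\<exists>c'. sim_config k c' cB' \<and> step k A w c c'"
proof -
  obtain q p r qB' p' rB' where c: "c = (q, p, r)" "cB' = (qB', p', rB')" by (cases c, cases cB')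
  obtain xs rB where cB: "cB = (encode_state q xs, p, rB)" and R: "represents k xs r rB"
    using S c by (cases cB) auto
  obtain t ys tB where t: "t \<in> trans A" and tB: "tB \<in> sim_trans k ys t"
    and sb: "step_by (Suc k) w tB (encode_state q xs, p, rB) (qB', p', rB')"
    and pos: "0 \<le> p'" "p' \<le> int (length w) + 1"
    using st c cB unfolding step_def pointer_automaton_def by auto
  have "trans_ok k (states A) t" using A t by (auto simp: modified_ra_def)
  moreover have "ys = xs" using tB sb by (rule sim_trans_source)
  ultimately obtain q' xs' r' where "qB' = encode_state q' xs'"
    "represents k xs' r' rB'" "step_by k w t (q, p, r) (q', p', r')"
    using sim_trans_backward[OF R _ _ sb] tB by blast
  then show ?thesis
    using t pos c by (auto simp: step_def)
qed

lemma accepts_simulation: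
  assumes sim: "\<And>c cB c'. S c cB \<Longrightarrow> step k A w c c' \<Longrightarrow> \<exists>cB'. S c' cB' \<and> step k' B w cB cB'"
    and init: "S (init A, 1, tau0 A) (init B, 1, tau0 B)"
    and final: "\<And>c cB. S c cB \<Longrightarrow> fst c \<in> final A \<Longrightarrow> fst cB \<in> final B"
    and "accepts k A w"
  shows "accepts k' B w"
proof -
  obtain q p r where reach: "(step k A w)\<^sup>*\<^sup>* (init A, 1, tau0 A) (q, p, r)" and "q \<in> final A"
    using \<open>accepts k A w\<close> unfolding accepts_def by blast
  have "\<exists>cB. S (q, p, r) cB \<and> (step k' B w)\<^sup>*\<^sup>* (init B, 1, tau0 B) cB"
    by (rule rtranclp_simulation[where S = S, OF _ reach init]) (rule sim)
  then obtain cB where "S (q, p, r) cB" and "(step k' B w)\<^sup>*\<^sup>* (init B, 1, tau0 B) cB"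
    by (elim exE conjE)
  moreover obtain qB pB rB where "cB = (qB, pB, rB)" by (cases cB)
  ultimately show ?thesis using final \<open>q \<in> final A\<close> unfolding accepts_def by fastforce
qed

lemma lang_pointer_automaton:
  fixes A :: "'d reg_aut"
  assumes A: "modified_ra k A" and R0: "represents k xs0 (tau0 A) rB0"
  shows "lang (Suc k) (pointer_automaton k A rB0 xs0) = lang k A"
proof -
  let ?B = "pointer_automaton k A rB0 xs0"
  have init: "sim_config k (init A, 1, tau0 A) (init ?B, 1, tau0 ?B)"
    using R0 by (auto simp: pointer_automaton_def)
  have final: "fst cB \<in> final ?B \<longleftrightarrow> fst c \<in> final A" if "sim_config k c cB" for c cB :: "'d config"
  proof -
    obtain q p r qB pB rB where c: "c = (q, p, r)" "cB = (qB, pB, rB)" by (cases c, cases cB)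
    with that obtain xs where "qB = encode_state q xs" "xs \<in> pointer_maps k"
      by (auto simp: represents_def)
    then show ?thesis using c by (simp add: pointer_automaton_def)
  qed
  have "accepts (Suc k) ?B w \<longleftrightarrow> accepts k A w" for w
  proof
    show "accepts (Suc k) ?B w" if "accepts k A w"
      by (rule accepts_simulation[where S = "sim_config k", OF _ init _ that])
        (use step_pointer_automaton_forward[OF A] final in blast)+
    show "accepts k A w" if "accepts (Suc k) ?B w"
      by (rule accepts_simulation[where S = "\<lambda>cB c. sim_config k c cB", OF _ init _ that])
        (use step_pointer_automaton_backward[OF A] final in blast)+
  qed
  then show ?thesis by (auto simp: lang_def)
qed

lemma represents_exists:
  assumes "infinite (UNIV :: 'd set)"
  shows "\<exists>xs (rB :: nat \<Rightarrow> 'd sym). represents k xs r rB"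
proof -
  let ?V = "r ` {1..k}"
  have "inj Let" by (auto simp: inj_def)
  with assms have "infinite (range (Let :: 'd \<Rightarrow> 'd sym))"
    using finite_imageD by blast
  then have "infinite (UNIV :: 'd sym set)"
    by (rule infinite_super[OF subset_UNIV])
  then obtain T where T: "finite T" "card T = Suc k - card ?V" "?V \<inter> T = {}"
    using finite_arbitrarily_large_disj[of ?V] by blast
  have "card ?V \<le> k" using card_image_le[of "{1..k}" r] by simp
  with T have "card (?V \<union> T) = Suc k" by (simp add: card_Un_disjoint)
  then obtain rB where rB: "bij_betw rB {1..Suc k} (?V \<union> T)"
    using ex_bij_betw_nat_finite_1[of "?V \<union> T"] T(1) by auto
  then have V: "r i \<in> rB ` {1..Suc k}" if "i \<in> {1..k}" for i
    using that by (simp add: bij_betw_def)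
  define xs where "xs = map (\<lambda>i. inv_into {1..Suc k} rB (r i)) [1..<Suc k]"
  have "inv_into {1..Suc k} rB (r i) \<in> {1..Suc k}" if "1 \<le> i" "i \<le> k" for i
    using V that by (intro inv_into_into) simp
  then have "xs \<in> pointer_maps k"
    by (auto simp: xs_def pointer_maps_def)
  moreover have "r i = rB (xs ! (i - 1))" if "i \<in> {1..k}" for i
  proof -
    have "xs ! (i - 1) = inv_into {1..Suc k} rB (r i)"
      using that by (auto simp: xs_def nth_upt simp del: upt_Suc)
    then show ?thesis using f_inv_into_f[OF V[OF that]] by simp
  qed
  ultimately have "represents k xs r rB"
    using rB by (simp add: represents_def bij_betw_def)
  then show ?thesis by blast
qed

theorem lemma1:
  fixes L :: "'d list set"
  assumes "infinite (UNIV :: 'd set)"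
  shows "(\<exists>k (A :: 'd reg_aut). original_ra k A \<and> lang k A = L)
     \<longleftrightarrow> (\<exists>k' (A' :: 'd reg_aut). modified_ra k' A' \<and> lang k' A' = L)"
proof
  assume "\<exists>k (A :: 'd reg_aut). original_ra k A \<and> lang k A = L"
  then show "\<exists>k' (A' :: 'd reg_aut). modified_ra k' A' \<and> lang k' A' = L"
    by (auto simp: original_ra_def)
next
  assume "\<exists>k' (A' :: 'd reg_aut). modified_ra k' A' \<and> lang k' A' = L"
  then obtain k and A :: "'d reg_aut" where A: "modified_ra k A" and L: "lang k A = L" by blast
  obtain xs0 and rB0 :: "nat \<Rightarrow> 'd sym" where R0: "represents k xs0 (tau0 A) rB0"
    using represents_exists[OF assms] by blast
  then have "xs0 \<in> pointer_maps k" by (simp add: represents_def)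
  with A have "original_ra (Suc k) (pointer_automaton k A rB0 xs0)"
    by (rule original_ra_pointer_automaton)
  moreover have "lang (Suc k) (pointer_automaton k A rB0 xs0) = L"
    using lang_pointer_automaton[OF A R0] L by simp
  ultimately show "\<exists>k (A :: 'd reg_aut). original_ra k A \<and> lang k A = L" by blast
qed

end
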